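(* For every integer $N\ge 1$, \[ \tilde S(N)-S(N)\le N\tau(N)\quad\text{and}\quad S(N)-\bar S(N)\le N\tau(N). \]
   Context: For $E\subset\mathbb{R}$, $q(E)=\min\{q\in\mathbb{N}^*:\exists p\in\mathbb{Z},\ p/q\in E\}$ (the smallest denominator of a rational number in $E$). Define $S(N)=\sum_{j=1}^N q\big(\,]\tfrac{j-1}N,\tfrac jN]\,\big)$, $\bar S(N)=\sum_{j=1}^N q\big([\tfrac{j-1}N,\tfrac jN]\big)$, $\tilde S(N)=\sum_{j=1}^N q\big(\,]\tfrac{j-1}N,\tfrac jN[\,\big)$. $\tau(N)$ is the number of divisors of $N$. *)

theory Defs
  imports Complex_Main
begin

text \<open>Smallest denominator of a rational number in E (E is assumed to contain a rational).\<close>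
definition qden :: "real set \<Rightarrow> nat" where
  "qden E = (LEAST q::nat. q > 0 \<and> (\<exists>p::int. real_of_int p / real q \<in> E))"

definition S :: "nat \<Rightarrow> nat" where
  "S N = (\<Sum>j=1..N. qden {real (j-1) / real N <.. real j / real N})"

definition Sbar :: "nat \<Rightarrow> nat" where
  "Sbar N = (\<Sum>j=1..N. qden {real (j-1) / real N .. real j / real N})"

definition Stilde :: "nat \<Rightarrow> nat" where
  "Stilde N = (\<Sum>j=1..N. qden {real (j-1) / real N <..< real j / real N})"

definition tau :: "nat \<Rightarrow> nat" where
  "tau N = card {d. d dvd N}"

end

theory Submission
  imports Defs "HOL-Number_Theory.Totient"
begin

text \<open>
  Removing an endpoint \<open>k/N\<close> from an interval can only increase its smallest denominator
  when that endpoint was the best rational of the interval; its denominator is then at least the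
  reduced denominator \<open>d = N/g\<close>, \<open>g = gcd k N\<close>. Writing \<open>k/N = p/d\<close> with \<open>p, d\<close> coprime, the
  equation \<open>r d - p s = \<plusminus>1\<close> has a solution with \<open>s\<close> in any window of length \<open>d\<close>, in particular
  with \<open>g < s \<le> g + d\<close>. Then \<open>r/s\<close> lies on the prescribed side of \<open>k/N\<close> at distance
  \<open>1/(s d) < 1/N\<close>, hence still in the interval, so each term grows by at most \<open>gcd k N\<close>.
  Finally \<open>\<Sum>k=1..N. gcd k N = \<Sum>d | d dvd N. d \<phi>(N/d) \<le> N \<tau>(N)\<close>.
\<close>

lemma qden_le:
  assumes "q > 0" "real_of_int p / real q \<in> E"
  shows "qden E \<le> q"
  unfolding qden_def by (rule Least_le) (use assms in auto)

lemma qden_attained: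
  assumes "q > 0" "real_of_int p / real q \<in> E"
  obtains m where "qden E > 0" "real_of_int m / real (qden E) \<in> E"
proof -
  have "qden E > 0 \<and> (\<exists>m::int. real_of_int m / real (qden E) \<in> E)"
    unfolding qden_def by (rule LeastI_ex) (use assms in blast)
  then show ?thesis using that by blast
qed

lemma reduced_denominator_dvd:
  fixes k N q :: nat and m :: int
  assumes "N > 0" "q > 0" "real_of_int m / real q = real k / real N"
  shows "N div gcd k N dvd q"
proof -
  define g where "g = gcd k N"
  obtain p d where pd: "k = p * g" "N = d * g" "coprime p d"
    using gcd_coprime_exists[of k N] assms(1) unfolding g_def by auto
  have g: "g > 0"
    using assms(1) unfolding g_def by simp
  have d: "d > 0" and dN: "N div g = d"
    using pd(2) assms(1) g by auto
  have "real_of_int m / real q = real p / real d"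
    using assms(3) g unfolding pd by simp
  then have "real_of_int (m * int d) = real_of_int (int p * int q)"
    using assms(2) d by (simp add: frac_eq_eq)
  then have "int d dvd int p * int q"
    unfolding of_int_eq_iff by (metis dvd_triv_right)
  then have "int d dvd int q"
    using pd(3) by (simp add: coprime_commute coprime_dvd_mult_right_iff)
  then show ?thesis
    using dN unfolding g_def by simp
qed

lemma coprime_solution_in_window:
  fixes p d c e :: int
  assumes "coprime p d" "d > 0"
  obtains r s where "c < s" "s \<le> c + d" "r * d - p * s = e"
proof -
  obtain u v where uv: "u * p + v * d = 1"
    using bezout_int[of p d] assms(1) by auto
  define s0 where "s0 = - u * e"
  have "(v * e) * d - p * s0 = e * (u * p + v * d)"
    unfolding s0_def by (simp add: algebra_simps)
  then have base: "(v * e) * d - p * s0 = e"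
    using uv by simp
  define t where "t = (c - s0) div d + 1"
  define s where "s = s0 + d * t"
  have "s = c + d - (c - s0) mod d"
    unfolding s_def t_def using div_mult_mod_eq[of "c - s0" d] by (simp add: algebra_simps)
  then have "c < s" "s \<le> c + d"
    using pos_mod_sign[of d "c - s0"] pos_mod_bound[of d "c - s0"] assms(2) by linarith+
  moreover have "(v * e + p * t) * d - p * s = e"
    using base unfolding s_def by (simp add: algebra_simps)
  ultimately show ?thesis
    using that by blast
qed

lemma fraction_near_grid_point:
  fixes k N :: nat and e :: int
  assumes "N > 0"
  obtains r :: int and s :: nat
  where "gcd k N < s" "s \<le> gcd k N + N div gcd k N" "real N < real s * real (N div gcd k N)"
    "real_of_int r / real s - real k / real N = real_of_int e / (real s * real (N div gcd k N))"
proof -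
  define g where "g = gcd k N"
  obtain p d where pd: "k = p * g" "N = d * g" "coprime p d"
    using gcd_coprime_exists[of k N] assms unfolding g_def by auto
  have g: "g > 0"
    using assms unfolding g_def by simp
  have d: "d > 0" and dN: "N div g = d"
    using pd(2) assms g by auto
  have "coprime (int p) (int d)" "int d > 0"
    using pd(3) d by simp_all
  then obtain r s' where s': "int g < s'" "s' \<le> int g + int d" and rs': "r * int d - int p * s' = e"
    by (rule coprime_solution_in_window)
  define s where "s = nat s'"
  have s: "g < s" "s \<le> g + d" and s_int: "int s = s'"
    using s' unfolding s_def by linarith+
  have "real_of_int (r * int d - int p * int s) = real_of_int e"
    using rs' s_int by simp
  then have "real_of_int r * real d - real p * real s = real_of_int e"
    by simp
  moreover have "real k / real N = real p / real d"
    unfolding pd using g by simp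
  ultimately have "real_of_int r / real s - real k / real N = real_of_int e / (real s * real d)"
    using s d by (simp add: diff_frac_eq)
  moreover have "real N < real s * real d"
    using s(1) d unfolding pd(2) by (simp flip: of_nat_mult)
  ultimately show ?thesis
    using that[of s r] s dN unfolding g_def by simp
qed

lemma fraction_right_of_grid_point:
  fixes k N :: nat
  assumes "N > 0"
  obtains r :: int and s :: nat where "0 < s" "s \<le> gcd k N + N div gcd k N"
    "real_of_int r / real s \<in> {real k / real N <..< real (Suc k) / real N}"
proof -
  obtain r s where s: "gcd k N < s" "s \<le> gcd k N + N div gcd k N"
    and gap: "real N < real s * real (N div gcd k N)"
    and eq: "real_of_int r / real s - real k / real N
      = real_of_int 1 / (real s * real (N div gcd k N))"
    by (rule fraction_near_grid_point[OF assms])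
  have "0 < 1 / (real s * real (N div gcd k N))" "1 / (real s * real (N div gcd k N)) < 1 / real N"
    using gap assms by (auto simp: frac_less2)
  moreover have "real (Suc k) / real N = real k / real N + 1 / real N"
    by (simp add: add_divide_distrib)
  ultimately have "real_of_int r / real s \<in> {real k / real N <..< real (Suc k) / real N}"
    using eq unfolding greaterThanLessThan_iff by linarith
  moreover have "0 < s"
    using s(1) by simp
  ultimately show ?thesis
    using that s(2) by blast
qed

lemma fraction_left_of_grid_point:
  fixes k N :: nat
  assumes "N > 0"
  obtains r :: int and s :: nat where "0 < s" "s \<le> gcd (Suc k) N + N div gcd (Suc k) N"
    "real_of_int r / real s \<in> {real k / real N <..< real (Suc k) / real N}"
proof -
  obtain r s where s: "gcd (Suc k) N < s" "s \<le> gcd (Suc k) N + N div gcd (Suc k) N"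
    and gap: "real N < real s * real (N div gcd (Suc k) N)"
    and eq: "real_of_int r / real s - real (Suc k) / real N
      = real_of_int (- 1) / (real s * real (N div gcd (Suc k) N))"
    by (rule fraction_near_grid_point[OF assms])
  have "0 < 1 / (real s * real (N div gcd (Suc k) N))"
    "1 / (real s * real (N div gcd (Suc k) N)) < 1 / real N"
    using gap assms by (auto simp: frac_less2)
  moreover have "real k / real N = real (Suc k) / real N - 1 / real N"
    by (simp add: add_divide_distrib)
  moreover have "real_of_int r / real s - real (Suc k) / real N
      = - (1 / (real s * real (N div gcd (Suc k) N)))"
    using eq by simp
  ultimately have "real_of_int r / real s \<in> {real k / real N <..< real (Suc k) / real N}"
    unfolding greaterThanLessThan_iff by linarith
  moreover have "0 < s"
    using s(1) by simp
  ultimately show ?thesis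
    using that s(2) by blast
qed

lemma qden_insert_grid_point_le:
  fixes k N s :: nat and r :: int
  assumes "N > 0" "0 < s" "s \<le> gcd k N + N div gcd k N" "real_of_int r / real s \<in> E"
  shows "qden E \<le> qden (insert (real k / real N) E) + gcd k N"
proof -
  let ?E' = "insert (real k / real N) E"
  obtain m where Q: "qden ?E' > 0" and m: "real_of_int m / real (qden ?E') \<in> ?E'"
    using qden_attained[of s r ?E'] assms(2,4) by blast
  show ?thesis
  proof (cases "real_of_int m / real (qden ?E') \<in> E")
    case True
    then show ?thesis using qden_le[OF Q True] by simp
  next
    case False
    then have "real_of_int m / real (qden ?E') = real k / real N"
      using m by simp
    then have "N div gcd k N \<le> qden ?E'"
      using reduced_denominator_dvd[OF assms(1) Q] Q by (blast intro: dvd_imp_le)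
    moreover have "qden E \<le> s"
      using qden_le[OF assms(2,4)] .
    ultimately show ?thesis using assms(3) by linarith
  qed
qed

lemma qden_greaterThanAtMost_le:
  fixes k N :: nat
  assumes "N > 0"
  shows "qden {real k / real N <.. real (Suc k) / real N}
    \<le> qden {real k / real N .. real (Suc k) / real N} + gcd k N"
proof -
  obtain r s where s: "0 < s" "s \<le> gcd k N + N div gcd k N"
    and rs: "real_of_int r / real s \<in> {real k / real N <..< real (Suc k) / real N}"
    by (rule fraction_right_of_grid_point[OF assms])
  have "real k / real N \<le> real (Suc k) / real N"
    by (simp add: divide_right_mono)
  then have "{real k / real N .. real (Suc k) / real N}
      = insert (real k / real N) {real k / real N <.. real (Suc k) / real N}"
    by auto
  moreover from rs have "real_of_int r / real s \<in> {real k / real N <.. real (Suc k) / real N}"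
    by simp
  ultimately show ?thesis
    using qden_insert_grid_point_le[OF assms s] by simp
qed

lemma qden_greaterThanLessThan_le:
  fixes k N :: nat
  assumes "N > 0"
  shows "qden {real k / real N <..< real (Suc k) / real N}
    \<le> qden {real k / real N <.. real (Suc k) / real N} + gcd (Suc k) N"
proof -
  obtain r s where s: "0 < s" "s \<le> gcd (Suc k) N + N div gcd (Suc k) N"
    and rs: "real_of_int r / real s \<in> {real k / real N <..< real (Suc k) / real N}"
    by (rule fraction_left_of_grid_point[OF assms])
  have "real k / real N < real (Suc k) / real N"
    using assms by (simp add: divide_strict_right_mono)
  then have "{real k / real N <.. real (Suc k) / real N}
      = insert (real (Suc k) / real N) {real k / real N <..< real (Suc k) / real N}"
    by auto
  then show ?thesis
    using qden_insert_grid_point_le[OF assms s rs] by simp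
qed

lemma sum_gcd_eq_divisor_sum:
  "(\<Sum>k=1..n. gcd k n) = (\<Sum>d | d dvd n. d * totient (n div d))"
proof (cases "n = 0")
  case False
  have "(\<Sum>k=1..n. gcd k n) = (\<Sum>d | d dvd n. \<Sum>k | k \<in> {1..n} \<and> gcd k n = d. gcd k n)"
    using False by (intro sum.group[symmetric]) auto
  also have "\<dots> = (\<Sum>d | d dvd n. d * card {k\<in>{0<..n}. gcd k n = d})"
    by (intro sum.cong refl) (simp add: atLeastSucAtMost_greaterThanAtMost)
  also have "\<dots> = (\<Sum>d | d dvd n. d * totient (n div d))"
    using False by (intro sum.cong refl, subst card_gcd_eq_totient) auto
  finally show ?thesis .
qed simp

lemma sum_gcd_le:
  "(\<Sum>k=1..n. gcd k n) \<le> n * tau n"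
proof -
  have "(\<Sum>k=1..n. gcd k n) \<le> (\<Sum>d | d dvd n. d * (n div d))"
    unfolding sum_gcd_eq_divisor_sum by (intro sum_mono mult_le_mono2 totient_le)
  also have "\<dots> = (\<Sum>d | d dvd n. n)" by (intro sum.cong refl) simp
  also have "\<dots> = n * tau n" by (simp add: tau_def)
  finally show ?thesis .
qed

lemma sum_lessThan_shift_periodic:
  fixes f :: "nat \<Rightarrow> 'a :: comm_monoid_add"
  assumes "f n = f 0"
  shows "(\<Sum>k<n. f (Suc k)) = (\<Sum>k<n. f k)"
proof (cases n)
  case (Suc m)
  have "(\<Sum>k<n. f k) = f 0 + (\<Sum>k<m. f (Suc k))"
    unfolding Suc by (rule sum.lessThan_Suc_shift)
  moreover have "(\<Sum>k<n. f (Suc k)) = (\<Sum>k<m. f (Suc k)) + f n"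
    unfolding Suc by simp
  ultimately show ?thesis using assms by (simp add: add.commute)
qed simp

lemma sum_gcd_shift:
  fixes n :: nat
  shows "(\<Sum>k=1..n. gcd (k - 1) n) = (\<Sum>k=1..n. gcd k n)"
proof -
  have shift: "(\<Sum>k=1..n. g k) = (\<Sum>k<n. g (Suc k))" for g :: "nat \<Rightarrow> nat"
    using sum.atLeast1_atMost_eq[of g n] by simp
  show ?thesis
    unfolding shift using sum_lessThan_shift_periodic[of "\<lambda>k. gcd k n" n] by simp
qed

theorem proposition7:
  fixes N :: nat
  assumes "N \<ge> 1"
  shows "int (Stilde N) - int (S N) \<le> int (N * tau N)
       \<and> int (S N) - int (Sbar N) \<le> int (N * tau N)"
proof -
  have N: "N > 0"
    using assms by simp
  have open_le: "qden {real (j - 1) / real N <..< real j / real N}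
      \<le> qden {real (j - 1) / real N <.. real j / real N} + gcd j N"
    and half_open_le: "qden {real (j - 1) / real N <.. real j / real N}
      \<le> qden {real (j - 1) / real N .. real j / real N} + gcd (j - 1) N"
    if j: "j \<in> {1..N}" for j
  proof -
    obtain k where "j = Suc k"
      using j by (cases j) auto
    then show "qden {real (j - 1) / real N <..< real j / real N}
        \<le> qden {real (j - 1) / real N <.. real j / real N} + gcd j N"
      and "qden {real (j - 1) / real N <.. real j / real N}
        \<le> qden {real (j - 1) / real N .. real j / real N} + gcd (j - 1) N"
      using qden_greaterThanLessThan_le[OF N, of k] qden_greaterThanAtMost_le[OF N, of k] by simp_all
  qed
  have "Stilde N \<le> S N + (\<Sum>j=1..N. gcd j N)"
    unfolding Stilde_def S_def sum.distrib[symmetric] by (rule sum_mono) (rule open_le)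
  moreover have "S N \<le> Sbar N + (\<Sum>j=1..N. gcd (j - 1) N)"
    unfolding S_def Sbar_def sum.distrib[symmetric] by (rule sum_mono) (rule half_open_le)
  ultimately show ?thesis
    using sum_gcd_le[of N] sum_gcd_shift[of N] by linarith
qed

end
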